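(* Let $\mathcal{G}$ be an additive arithmetical semigroup satisfying Axiom $A^{\#}$ with constants $c_{\mathcal{G}}>0$, $q>1$, $0\le\eta<1$, and $Z_{\mathcal{G}}(-q^{-1})\neq0$. If $S\subseteq\mathcal{P}$ has natural density $\delta(S)$, then $$\sum_{\partial(g)=n}Q_S(g)=c_{\mathcal{G}}\,\delta(S)\,q^{n}+o(q^{n})\qquad(n\to\infty).$$
   Context: An additive arithmetical semigroup is a commutative monoid $\mathcal{G}$ (written additively, identity $e_{\mathcal{G}}$) freely generated by a countable set $\mathcal{P}$ of primes, with an additive degree map $\partial\colon\mathcal{G}\to\mathbb{Z}_{\ge0}$, $\partial(e_{\mathcal{G}})=0$, $\partial(P)>0$ for primes, and finitely many elements of each degree. Axiom $A^{\#}$: $\#\{g:\partial(g)=n\}=c_{\mathcal{G}}q^n+O(q^{\eta n})$. $Z_{\mathcal{G}}(z)=\prod_{P\in\mathcal{P}}(1-z^{\partial(P)})^{-1}$ (meromorphically continued). Natural density: $\delta(S)=\lim_{n\to\infty}\#\{P\in S:\partial(P)=n\}/\#\{P\in\mathcal{P}:\partial(P)=n\}$. $P\mid g$ means $g=P+r$ for some $r\in\mathcal{G}$. $d^+(g)=\max\{\partial(P):P\in\mathcal{P},P\mid g\}$ and $d^+(e_{\mathcal{G}})=0$. $Q_S(g)=\#\{P\in S: P\mid g,\ \partial(P)=d^+(g)\}$. *)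

theory Defs
  imports "HOL-Analysis.Analysis" "HOL-Library.Multiset" "HOL-Library.Landau_Symbols"
begin

text \<open>The additive arithmetical semigroup freely generated by the primes (elements of
  the type 'p) is modelled as the free commutative monoid 'p multiset; the degree
  of a prime is given by dp, extended additively.\<close>

definition degG :: "('p \<Rightarrow> nat) \<Rightarrow> 'p multiset \<Rightarrow> nat" where
  "degG dp g = sum_mset (image_mset dp g)"

definition Gcount :: "('p \<Rightarrow> nat) \<Rightarrow> nat \<Rightarrow> nat" where
  "Gcount dp n = card {g. degG dp g = n}"

definition Pcount :: "('p \<Rightarrow> nat) \<Rightarrow> nat \<Rightarrow> nat" where
  "Pcount dp n = card {P. dp P = n}"

text \<open>Largest degree of a prime divisor (0 for the identity).  P divides g iff P in g.\<close>
definition dplus :: "('p \<Rightarrow> nat) \<Rightarrow> 'p multiset \<Rightarrow> nat" where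
  "dplus dp g = (if g = {#} then 0 else Max (dp ` set_mset g))"

definition QS :: "('p \<Rightarrow> nat) \<Rightarrow> 'p set \<Rightarrow> 'p multiset \<Rightarrow> nat" where
  "QS dp S g = card {P \<in> S. P \<in># g \<and> dp P = dplus dp g}"

text \<open>Euler product Z_G(z) = prod over primes (1 - z^deg P)^(-1), grouping the
  finitely many primes of each degree m.\<close>
definition ZG :: "('p \<Rightarrow> nat) \<Rightarrow> complex \<Rightarrow> complex" where
  "ZG dp z = (\<Prod>m. inverse ((1 - z ^ Suc m) ^ Pcount dp (Suc m)))"

definition has_natural_density :: "('p \<Rightarrow> nat) \<Rightarrow> 'p set \<Rightarrow> real \<Rightarrow> bool" where
  "has_natural_density dp S d \<longleftrightarrow>
     ((\<lambda>n. real (card {P \<in> S. dp P = n}) / real (Pcount dp n)) \<longlongrightarrow> d) sequentially"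

end

theory Submission
  imports Defs "HOL-Complex_Analysis.Complex_Analysis"
begin

text \<open>Grouping the elements of degree \<open>n\<close> by a prime of maximal degree \<open>m\<close> gives
  \<open>\<Sum>\<^sub>g Q\<^sub>S(g) = \<Sum>\<^sub>m \<pi>\<^sub>S(m) N(m, n - m)\<close>, where \<open>N(m, k) = card (smooth m k)\<close> counts
  the elements of degree \<open>k\<close> whose prime factors all have degree at most \<open>m\<close>. For fixed \<open>m\<close>,
  \<open>N(m, k)\<close> grows only polynomially in \<open>k\<close>, so only large \<open>m\<close> matter, and there
  \<open>\<pi>\<^sub>S(m) \<approx> \<delta> \<pi>(m)\<close>: the sum for \<open>S\<close> is \<open>\<delta>\<close> times the sum over all primes, up to \<open>o(q\<^sup>n)\<close>.
  Over all primes the sum exceeds \<open>G(n)\<close> only through elements with two distinct primes of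
  maximal degree; there are at most \<open>\<Sum>\<^sub>m \<pi>(m)\<^sup>2 G(n - 2m) = o(q\<^sup>n)\<close> of them, by the
  Chebyshev-type bound \<open>\<pi>(m) = O(q\<^sup>m/m)\<close>. That bound is read off from the logarithmic
  derivative of \<open>(1 - qz) Z(z)\<close>, which Axiom \<open>A\<^sup>#\<close> makes analytic beyond the radius \<open>1/q\<close>.\<close>

section \<open>Counting by the largest prime factor\<close>

lemma sum_multiples_reindex:
  fixes d :: nat
  assumes "d > 0"
  shows "(\<Sum>j\<in>{1..n div d}. f (j * d)) = (\<Sum>k\<in>{k\<in>{1..n}. d dvd k}. f k)"
proof (rule sum.reindex_bij_witness[of _ "\<lambda>k. k div d" "\<lambda>j. j * d"])
  show "j * d \<in> {k\<in>{1..n}. d dvd k}" if "j \<in> {1..n div d}" for j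
    using that assms by (auto simp: less_eq_div_iff_mult_less_eq)
  show "k div d \<in> {1..n div d}" if "k \<in> {k\<in>{1..n}. d dvd k}" for k
    using that assms by (auto simp: div_le_mono elim!: dvdE)
qed (use assms in auto)

lemma card_distinct_pairs:
  assumes "finite X"
  shows "card {(x, y). x \<in> X \<and> y \<in> X \<and> x \<noteq> y} = card X * (card X - 1)"
proof -
  have "{(x, y). x \<in> X \<and> y \<in> X \<and> x \<noteq> y} = X \<times> X - (\<lambda>x. (x, x)) ` X" by auto
  moreover have "card ((\<lambda>x. (x, x)) ` X) = card X" by (simp add: card_image inj_on_def)
  moreover have "(\<lambda>x. (x, x)) ` X \<subseteq> X \<times> X" by auto
  ultimately show ?thesis
    using assms by (simp add: card_Diff_subset card_cartesian_product diff_mult_distrib2)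
qed

lemma degG_empty [simp]: "degG dp {#} = 0"
  by (simp add: degG_def)

lemma degG_add [simp]: "degG dp (a + b) = degG dp a + degG dp b"
  by (simp add: degG_def)

lemma degG_add_mset [simp]: "degG dp (add_mset x a) = dp x + degG dp a"
  by (simp add: degG_def)

lemma degG_replicate_mset [simp]: "degG dp (replicate_mset j x) = j * dp x"
  by (induction j) auto

lemma degG_eq_sum_count:
  assumes "finite A" "set_mset g \<subseteq> A"
  shows "degG dp g = (\<Sum>P\<in>A. count g P * dp P)"
  using assms(2)
proof (induction g)
  case (add x g)
  have "(\<Sum>P\<in>A. count (add_mset x g) P * dp P) = (\<Sum>P\<in>A. count g P * dp P + (if P = x then dp x else 0))"
    by (intro sum.cong) auto
  also have "\<dots> = (\<Sum>P\<in>A. count g P * dp P) + dp x"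
    using assms(1) add.prems by (simp add: sum.distrib)
  finally show ?case using add by simp
qed simp

lemma degG_diff: "h \<subseteq># g \<Longrightarrow> degG dp (g - h) = degG dp g - degG dp h"
  using degG_add[of dp h "g - h"] by (simp add: subset_mset.add_diff_inverse)

lemma degG_mono: "h \<subseteq># g \<Longrightarrow> degG dp h \<le> degG dp g"
  using degG_add[of dp h "g - h"] by (simp add: subset_mset.add_diff_inverse)

locale arith_semigroup =
  fixes dp :: "'p \<Rightarrow> nat"
  assumes deg_pos: "\<And>P. dp P > 0"
    and finite_deg: "\<And>n. finite {g. degG dp g = n}"
begin

definition elems_of_deg :: "nat \<Rightarrow> 'p multiset set" where
  "elems_of_deg n = {g. degG dp g = n}"

definition primes_of_deg :: "'p set \<Rightarrow> nat \<Rightarrow> 'p set" where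
  "primes_of_deg S n = {P \<in> S. dp P = n}"

definition primes_upto :: "nat \<Rightarrow> 'p set" where
  "primes_upto n = {P. dp P \<le> n}"

definition smooth :: "nat \<Rightarrow> nat \<Rightarrow> 'p multiset set" where
  "smooth m k = {r. degG dp r = k \<and> (\<forall>Q\<in>#r. dp Q \<le> m)}"

text \<open>\<open>Lambda k\<close> is the coefficient of \<open>z\<^sup>k\<close> in the logarithmic derivative
  \<open>z Z'(z) / Z(z)\<close> of the zeta function.\<close>

definition Lambda :: "nat \<Rightarrow> nat" where
  "Lambda k = (\<Sum>P\<in>primes_upto k. if dp P dvd k then dp P else 0)"

definition top_primes :: "'p set \<Rightarrow> 'p multiset \<Rightarrow> 'p set" where
  "top_primes S g = {P \<in> S. P \<in># g \<and> dp P = dplus dp g}"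

lemma finite_elems_of_deg [simp]: "finite (elems_of_deg n)"
  using finite_deg by (simp add: elems_of_deg_def)

lemma card_elems_of_deg: "card (elems_of_deg n) = Gcount dp n"
  by (simp add: elems_of_deg_def Gcount_def)

lemma degG_eq_0_iff: "degG dp g = 0 \<longleftrightarrow> g = {#}"
  by (cases g) (auto simp: deg_pos[THEN gr_implies_not0])

lemma Gcount_0: "Gcount dp 0 = 1"
proof -
  have "{g. degG dp g = 0} = {{#}}" by (auto simp: degG_eq_0_iff)
  then show ?thesis by (simp add: Gcount_def)
qed

lemma deg_le_degG: "P \<in># g \<Longrightarrow> dp P \<le> degG dp g"
  by (auto dest: multi_member_split)

lemma count_mult_deg_le_degG: "count g P * dp P \<le> degG dp g"
proof -
  have "replicate_mset (count g P) P \<subseteq># g"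
    by (simp add: subseteq_mset_def count_replicate_mset)
  from degG_mono[OF this, of dp] show ?thesis by simp
qed

lemma finite_primes_of_deg [simp]: "finite (primes_of_deg S n)"
proof -
  have "(\<lambda>P. {#P#}) ` primes_of_deg S n \<subseteq> elems_of_deg n"
    by (auto simp: primes_of_deg_def elems_of_deg_def)
  then have "finite ((\<lambda>P. {#P#}) ` primes_of_deg S n)" by (rule finite_subset) simp
  then show ?thesis by (rule finite_imageD) (auto simp: inj_on_def)
qed

lemma card_primes_of_deg_UNIV: "card (primes_of_deg UNIV n) = Pcount dp n"
  by (simp add: primes_of_deg_def Pcount_def)

lemma card_primes_of_deg_le: "card (primes_of_deg S n) \<le> Pcount dp n"
  unfolding card_primes_of_deg_UNIV[symmetric]
  by (intro card_mono finite_primes_of_deg) (auto simp: primes_of_deg_def)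

lemma finite_primes_upto [simp]: "finite (primes_upto n)"
proof -
  have "primes_upto n = (\<Union>k\<in>{..n}. primes_of_deg UNIV k)"
    by (auto simp: primes_upto_def primes_of_deg_def)
  then show ?thesis by (simp only:) (intro finite_UN_I finite_atMost finite_primes_of_deg)
qed

lemma smooth_subset: "smooth m k \<subseteq> elems_of_deg k"
  by (auto simp: smooth_def elems_of_deg_def)

lemma finite_smooth [simp]: "finite (smooth m k)"
  using smooth_subset finite_elems_of_deg finite_subset by blast

lemma card_smooth_le_Gcount: "card (smooth m k) \<le> Gcount dp k"
  unfolding card_elems_of_deg[symmetric] by (intro card_mono smooth_subset) simp

text \<open>An \<open>m\<close>-smooth element is determined by its multiplicities at the finitely many
  primes of degree at most \<open>m\<close>, each of which is at most \<open>k\<close>.\<close>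

lemma card_smooth_le: "card (smooth m k) \<le> (k + 1) ^ card (primes_upto m)"
proof -
  let ?f = "\<lambda>r. restrict (count r) (primes_upto m)"
  have inj: "inj_on ?f (smooth m k)"
  proof (rule inj_onI)
    fix r r' assume r: "r \<in> smooth m k" and r': "r' \<in> smooth m k" and eq: "?f r = ?f r'"
    show "r = r'"
    proof (rule multiset_eqI)
      fix Q show "count r Q = count r' Q"
      proof (cases "Q \<in> primes_upto m")
        case True then show ?thesis using fun_cong[OF eq, of Q] by simp
      next
        case False
        then have "Q \<notin># r" "Q \<notin># r'" using r r' by (auto simp: smooth_def primes_upto_def)
        then show ?thesis by (simp add: not_in_iff)
      qed
    qed
  qed
  have "count r P \<le> k" if "r \<in> smooth m k" for r P
  proof -
    have "count r P \<le> count r P * dp P" using deg_pos[of P] by simp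
    also have "\<dots> \<le> k" using count_mult_deg_le_degG[of r P] that by (simp add: smooth_def)
    finally show ?thesis .
  qed
  then have "?f ` smooth m k \<subseteq> primes_upto m \<rightarrow>\<^sub>E {0..k}" by auto
  then have "card (?f ` smooth m k) \<le> card (primes_upto m \<rightarrow>\<^sub>E {0..k})"
    by (intro card_mono) (simp_all add: finite_PiE)
  also have "\<dots> = (k + 1) ^ card (primes_upto m)" by (simp add: card_funcsetE)
  finally show ?thesis by (simp only: card_image[OF inj])
qed

lemma card_count_ge:
  assumes "j * dp P \<le> n"
  shows "card {g \<in> elems_of_deg n. j \<le> count g P} = Gcount dp (n - j * dp P)"
proof -
  let ?f = "\<lambda>r. r + replicate_mset j P"
  have "{g \<in> elems_of_deg n. j \<le> count g P} = ?f ` elems_of_deg (n - j * dp P)"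
  proof (intro equalityI subsetI)
    fix g assume g: "g \<in> {g \<in> elems_of_deg n. j \<le> count g P}"
    have sub: "replicate_mset j P \<subseteq># g"
      using g by (simp add: subseteq_mset_def count_replicate_mset)
    then have "g = ?f (g - replicate_mset j P)" by (simp add: subset_mset.diff_add)
    moreover have "g - replicate_mset j P \<in> elems_of_deg (n - j * dp P)"
      using g degG_diff[OF sub, of dp] by (simp add: elems_of_deg_def)
    ultimately show "g \<in> ?f ` elems_of_deg (n - j * dp P)" by blast
  qed (use assms in \<open>auto simp: elems_of_deg_def\<close>)
  moreover have "inj_on ?f (elems_of_deg (n - j * dp P))" by (auto simp: inj_on_def)
  ultimately show ?thesis by (simp add: card_image card_elems_of_deg)
qed

lemma sum_count_elems_of_deg:
  "(\<Sum>g\<in>elems_of_deg n. count g P) = (\<Sum>j\<in>{1..n div dp P}. Gcount dp (n - j * dp P))"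
proof -
  let ?J = "{1..n div dp P}"
  have le_iff: "j * dp P \<le> n \<longleftrightarrow> j \<le> n div dp P" for j
    using deg_pos[of P] by (simp add: less_eq_div_iff_mult_less_eq)
  have "count g P = card {j\<in>?J. j \<le> count g P}" if "g \<in> elems_of_deg n" for g
  proof -
    have "count g P \<le> n div dp P"
      using count_mult_deg_le_degG[of g P] that le_iff by (simp add: elems_of_deg_def)
    then have "{j\<in>?J. j \<le> count g P} = {1..count g P}" by auto
    then show ?thesis by simp
  qed
  then have "(\<Sum>g\<in>elems_of_deg n. count g P) = (\<Sum>g\<in>elems_of_deg n. card {j\<in>?J. j \<le> count g P})"
    by (intro sum.cong) auto
  also have "\<dots> = (\<Sum>g\<in>elems_of_deg n. \<Sum>j\<in>?J. if j \<le> count g P then 1 else 0)"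
    by (intro sum.cong refl) (simp only: card_eq_sum sum.inter_filter[OF finite_atLeastAtMost])
  also have "\<dots> = (\<Sum>j\<in>?J. \<Sum>g\<in>elems_of_deg n. if j \<le> count g P then 1 else 0)"
    by (rule sum.swap)
  also have "\<dots> = (\<Sum>j\<in>?J. card {g\<in>elems_of_deg n. j \<le> count g P})"
    by (intro sum.cong refl) (simp only: card_eq_sum sum.inter_filter[OF finite_elems_of_deg])
  also have "\<dots> = (\<Sum>j\<in>?J. Gcount dp (n - j * dp P))"
    by (intro sum.cong refl card_count_ge) (simp add: le_iff)
  finally show ?thesis .
qed

lemma n_mult_Gcount_eq: "n * Gcount dp n = (\<Sum>k\<in>{1..n}. Lambda k * Gcount dp (n - k))"
proof -
  have "n * Gcount dp n = (\<Sum>g\<in>elems_of_deg n. degG dp g)"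
    by (simp add: elems_of_deg_def Gcount_def)
  also have "\<dots> = (\<Sum>g\<in>elems_of_deg n. \<Sum>P\<in>primes_upto n. count g P * dp P)"
  proof (intro sum.cong refl degG_eq_sum_count)
    show "set_mset g \<subseteq> primes_upto n" if "g \<in> elems_of_deg n" for g
      using that deg_le_degG by (fastforce simp: elems_of_deg_def primes_upto_def)
  qed simp
  also have "\<dots> = (\<Sum>P\<in>primes_upto n. dp P * (\<Sum>g\<in>elems_of_deg n. count g P))"
    by (subst sum.swap) (simp add: sum_distrib_left mult.commute)
  also have "\<dots> = (\<Sum>P\<in>primes_upto n. dp P * (\<Sum>k\<in>{k\<in>{1..n}. dp P dvd k}. Gcount dp (n - k)))"
    by (intro sum.cong refl)
      (simp only: sum_count_elems_of_deg sum_multiples_reindex[OF deg_pos, where f = "\<lambda>k. Gcount dp (n - k)"])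
  also have "\<dots> = (\<Sum>P\<in>primes_upto n. \<Sum>k\<in>{1..n}. if dp P dvd k then dp P * Gcount dp (n - k) else 0)"
    unfolding sum_distrib_left
    by (rule sum.cong[OF refl]) (simp only: sum.inter_filter[OF finite_atLeastAtMost])
  also have "\<dots> = (\<Sum>k\<in>{1..n}. \<Sum>P\<in>primes_upto n. if dp P dvd k then dp P * Gcount dp (n - k) else 0)"
    by (rule sum.swap)
  also have "\<dots> = (\<Sum>k\<in>{1..n}. Lambda k * Gcount dp (n - k))"
  proof (intro sum.cong refl)
    fix k assume k: "k \<in> {1..n}"
    have "(\<Sum>P\<in>primes_upto n. if dp P dvd k then dp P * Gcount dp (n - k) else 0)
        = (\<Sum>P\<in>primes_upto k. if dp P dvd k then dp P * Gcount dp (n - k) else 0)"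
      by (rule sum.mono_neutral_right[OF finite_primes_upto]) (use k in \<open>auto simp: primes_upto_def dest: dvd_imp_le\<close>)
    also have "\<dots> = Lambda k * Gcount dp (n - k)"
      unfolding Lambda_def sum_distrib_right by (rule sum.cong[OF refl]) simp
    finally show "(\<Sum>P\<in>primes_upto n. if dp P dvd k then dp P * Gcount dp (n - k) else 0)
             = Lambda k * Gcount dp (n - k)" .
  qed
  finally show ?thesis .
qed

lemma Lambda_0 [simp]: "Lambda 0 = 0"
  by (simp add: Lambda_def primes_upto_def)

lemma n_mult_Pcount_le_Lambda: "n * Pcount dp n \<le> Lambda n"
proof -
  have "n * Pcount dp n = (\<Sum>P\<in>primes_of_deg UNIV n. if dp P dvd n then dp P else 0)"
    by (simp add: card_primes_of_deg_UNIV[symmetric] primes_of_deg_def)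
  also have "\<dots> \<le> Lambda n" unfolding Lambda_def
    by (rule sum_mono2[OF finite_primes_upto]) (auto simp: primes_of_deg_def primes_upto_def)
  finally show ?thesis .
qed

lemma Lambda_le_n_mult_Gcount: "Lambda n \<le> n * Gcount dp n"
proof (cases "n = 0")
  case False
  then have "Lambda n * Gcount dp (n - n) \<le> (\<Sum>k\<in>{1..n}. Lambda k * Gcount dp (n - k))"
    by (intro member_le_sum) auto
  then show ?thesis using Gcount_0 n_mult_Gcount_eq[of n] by simp
qed simp

lemma QS_eq_card_top_primes: "QS dp S g = card (top_primes S g)"
  by (simp add: QS_def top_primes_def)

lemma finite_top_primes [simp]: "finite (top_primes S g)"
  by (rule finite_subset[of _ "set_mset g"]) (auto simp: top_primes_def)

lemma deg_eq_dplus_iff: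
  assumes "P \<in># g"
  shows "dp P = dplus dp g \<longleftrightarrow> (\<forall>Q\<in>#g. dp Q \<le> dp P)"
proof -
  have "dplus dp g = Max (dp ` set_mset g)" using assms by (auto simp: dplus_def)
  moreover have "Max (dp ` set_mset g) = dp P \<longleftrightarrow> (\<forall>Q\<in>#g. dp Q \<le> dp P)"
    using assms by (subst Max_eq_iff) auto
  ultimately show ?thesis by auto
qed

lemma deg_top_prime_bounds:
  assumes "P \<in> top_primes S g" "g \<in> elems_of_deg n"
  shows "1 \<le> dp P" "dp P \<le> n"
  using assms deg_pos[of P] deg_le_degG[of P g] by (auto simp: top_primes_def elems_of_deg_def)

lemma bij_betw_top_prime_split:
  assumes "m \<le> n"
  shows "bij_betw (\<lambda>(P, r). (r + {#P#}, P)) (primes_of_deg S m \<times> smooth m (n - m))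
           {(g, P). g \<in> elems_of_deg n \<and> P \<in> top_primes S g \<and> dp P = m}"
proof (rule bij_betw_imageI)
  show "inj_on (\<lambda>(P, r). (r + {#P#}, P)) (primes_of_deg S m \<times> smooth m (n - m))"
    by (auto simp: inj_on_def)
  show "(\<lambda>(P, r). (r + {#P#}, P)) ` (primes_of_deg S m \<times> smooth m (n - m))
      = {(g, P). g \<in> elems_of_deg n \<and> P \<in> top_primes S g \<and> dp P = m}"
  proof (intro equalityI subsetI)
    fix x assume "x \<in> (\<lambda>(P, r). (r + {#P#}, P)) ` (primes_of_deg S m \<times> smooth m (n - m))"
    then obtain P r where x: "x = (r + {#P#}, P)" "P \<in> primes_of_deg S m" "r \<in> smooth m (n - m)"
      by auto
    then have "degG dp (r + {#P#}) = n" "\<forall>Q\<in>#r + {#P#}. dp Q \<le> dp P"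
      using assms by (auto simp: smooth_def primes_of_deg_def)
    then show "x \<in> {(g, P). g \<in> elems_of_deg n \<and> P \<in> top_primes S g \<and> dp P = m}"
      using x deg_eq_dplus_iff[of P "r + {#P#}"]
      by (auto simp: elems_of_deg_def top_primes_def primes_of_deg_def)
  next
    fix x assume "x \<in> {(g, P). g \<in> elems_of_deg n \<and> P \<in> top_primes S g \<and> dp P = m}"
    then obtain g P where x: "x = (g, P)" "g \<in> elems_of_deg n" "P \<in> top_primes S g" "dp P = m"
      by auto
    then have P: "P \<in># g" "\<forall>Q\<in>#g. dp Q \<le> m"
      using deg_eq_dplus_iff[of P g] by (auto simp: top_primes_def)
    then have "degG dp (g - {#P#}) = n - m"
      using x degG_diff[of "{#P#}" g dp] by (simp add: elems_of_deg_def)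
    then have "g - {#P#} \<in> smooth m (n - m)"
      using P by (auto simp: smooth_def dest: in_diffD)
    moreover have "P \<in> primes_of_deg S m" using x by (simp add: primes_of_deg_def top_primes_def)
    ultimately show "x \<in> (\<lambda>(P, r). (r + {#P#}, P)) ` (primes_of_deg S m \<times> smooth m (n - m))"
      using x P by (intro image_eqI[of _ _ "(P, g - {#P#})"]) auto
  qed
qed

lemma sum_QS_eq:
  "(\<Sum>g\<in>elems_of_deg n. QS dp S g) = (\<Sum>m\<in>{1..n}. card (primes_of_deg S m) * card (smooth m (n - m)))"
proof -
  define A where "A m = {(g, P). g \<in> elems_of_deg n \<and> P \<in> top_primes S g \<and> dp P = m}" for m
  have "(\<Sum>g\<in>elems_of_deg n. QS dp S g) = card (SIGMA g:elems_of_deg n. top_primes S g)"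
    by (simp add: QS_eq_card_top_primes card_SigmaI)
  also have "(SIGMA g:elems_of_deg n. top_primes S g) = (\<Union>m\<in>{1..n}. A m)"
    using deg_top_prime_bounds by (fastforce simp: A_def)
  also have "card \<dots> = (\<Sum>m\<in>{1..n}. card (A m))"
  proof (rule card_UN_disjoint)
    show "\<forall>m\<in>{1..n}. finite (A m)"
      by (auto intro: finite_subset[of _ "SIGMA g:elems_of_deg n. top_primes S g"] simp: A_def)
  qed (auto simp: A_def)
  also have "\<dots> = (\<Sum>m\<in>{1..n}. card (primes_of_deg S m) * card (smooth m (n - m)))"
    using bij_betw_top_prime_split[THEN bij_betw_same_card]
    by (intro sum.cong refl) (simp add: A_def card_cartesian_product)
  finally show ?thesis .
qed

lemma QS_UNIV_pos:
  assumes "g \<in> elems_of_deg n" "n \<ge> 1"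
  shows "QS dp UNIV g \<ge> 1"
proof -
  have "g \<noteq> {#}" using assms by (auto simp: elems_of_deg_def)
  then have "Max (dp ` set_mset g) \<in> dp ` set_mset g" by (intro Max_in) auto
  then obtain P where "P \<in># g" "dp P = Max (dp ` set_mset g)" by auto
  then have "P \<in> top_primes UNIV g" using \<open>g \<noteq> {#}\<close> by (simp add: top_primes_def dplus_def)
  then show ?thesis unfolding QS_eq_card_top_primes using card_0_eq[OF finite_top_primes] by fastforce
qed

lemma top_prime_pair:
  assumes "P \<in> top_primes UNIV g" "P' \<in> top_primes UNIV g" "P \<noteq> P'"
  shows "{#P, P'#} \<subseteq># g" "\<forall>Q\<in>#g. dp Q \<le> dp P" "dp P' = dp P"
proof -
  have P: "P \<in># g" "P' \<in># g" "dp P = dplus dp g" "dp P' = dplus dp g"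
    using assms by (auto simp: top_primes_def)
  then show "{#P, P'#} \<subseteq># g" using assms(3) by (auto simp: subseteq_mset_def Suc_le_eq)
  show "\<forall>Q\<in>#g. dp Q \<le> dp P" "dp P' = dp P"
    using P deg_eq_dplus_iff[of P g] by auto
qed

lemma card_top_prime_pairs_le:
  "card {(g, P, P'). g \<in> elems_of_deg n \<and> P \<in> top_primes UNIV g \<and> P' \<in> top_primes UNIV g
                     \<and> P \<noteq> P' \<and> dp P = m}
     \<le> Pcount dp m ^ 2 * (if 2 * m \<le> n then card (smooth m (n - 2 * m)) else 0)"
  (is "card ?B \<le> _")
proof -
  have pair: "{#P, P'#} \<subseteq># g" "\<forall>Q\<in>#g. dp Q \<le> m" "dp P' = m" "degG dp g = n"
    if "(g, P, P') \<in> ?B" for g P P'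
  proof -
    have "P \<in> top_primes UNIV g" "P' \<in> top_primes UNIV g" "P \<noteq> P'" "dp P = m" "g \<in> elems_of_deg n"
      using that by auto
    then show "{#P, P'#} \<subseteq># g" "\<forall>Q\<in>#g. dp Q \<le> m" "dp P' = m" "degG dp g = n"
      using top_prime_pair[of P g P'] by (simp_all add: elems_of_deg_def)
  qed
  show ?thesis
  proof (cases "2 * m \<le> n")
    case False
    have empty: "?B = {}"
    proof (rule ccontr)
      assume "?B \<noteq> {}"
      then obtain g P P' where x: "(g, P, P') \<in> ?B" by auto
      then have "degG dp {#P, P'#} \<le> degG dp g" by (intro degG_mono pair)
      with pair[OF x] x False show False by simp
    qed
    show ?thesis unfolding empty by simp
  next
    case True
    let ?h = "\<lambda>(g, P, P'). ((P, P'), g - {#P, P'#})"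
    have "card ?B \<le> card ((primes_of_deg UNIV m \<times> primes_of_deg UNIV m) \<times> smooth m (n - 2 * m))"
    proof (rule card_inj_on_le)
      show "inj_on ?h ?B"
      proof (rule inj_onI)
        fix x y assume x: "x \<in> ?B" and y: "y \<in> ?B" and eq: "?h x = ?h y"
        obtain g P P' g' where xy: "x = (g, P, P')" "y = (g', P, P')"
          and diff: "g - {#P, P'#} = g' - {#P, P'#}"
          using eq by (cases x, cases y) auto
        have "g = (g - {#P, P'#}) + {#P, P'#}"
          using x xy by (intro subset_mset.diff_add[symmetric] pair(1)) simp
        also have "\<dots> = g'"
          unfolding diff using y xy by (intro subset_mset.diff_add pair(1)) simp
        finally show "x = y" using xy by simp
      qed
      show "?h ` ?B \<subseteq> (primes_of_deg UNIV m \<times> primes_of_deg UNIV m) \<times> smooth m (n - 2 * m)"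
      proof
        fix z assume "z \<in> ?h ` ?B"
        then obtain g P P' where x: "(g, P, P') \<in> ?B" and z: "z = ((P, P'), g - {#P, P'#})"
          by auto
        have "degG dp (g - {#P, P'#}) = n - 2 * m"
          using degG_diff[OF pair(1)[OF x], of dp] pair[OF x] x by simp
        then show "z \<in> (primes_of_deg UNIV m \<times> primes_of_deg UNIV m) \<times> smooth m (n - 2 * m)"
          using pair[OF x] x z by (auto simp: primes_of_deg_def smooth_def dest: in_diffD)
      qed
    qed (simp add: finite_cartesian_product)
    then show ?thesis
      using True by (simp add: card_cartesian_product card_primes_of_deg_UNIV power2_eq_square)
  qed
qed

lemma sum_QS_pairs_le:
  "(\<Sum>g\<in>elems_of_deg n. QS dp UNIV g * (QS dp UNIV g - 1))
     \<le> (\<Sum>m\<in>{1..n}. Pcount dp m ^ 2 * (if 2 * m \<le> n then card (smooth m (n - 2 * m)) else 0))"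
proof -
  define D where "D g = {(P, P'). P \<in> top_primes UNIV g \<and> P' \<in> top_primes UNIV g \<and> P \<noteq> P'}" for g
  define B where "B m = {(g, P, P'). g \<in> elems_of_deg n \<and> P \<in> top_primes UNIV g
                   \<and> P' \<in> top_primes UNIV g \<and> P \<noteq> P' \<and> dp P = m}" for m
  have finite_D: "finite (D g)" for g
    by (rule finite_subset[of _ "top_primes UNIV g \<times> top_primes UNIV g"]) (auto simp: D_def)
  have "(\<Sum>g\<in>elems_of_deg n. QS dp UNIV g * (QS dp UNIV g - 1)) = (\<Sum>g\<in>elems_of_deg n. card (D g))"
    by (simp add: D_def QS_eq_card_top_primes card_distinct_pairs)
  also have "\<dots> = card (SIGMA g:elems_of_deg n. D g)" by (simp add: card_SigmaI finite_D)
  also have "(SIGMA g:elems_of_deg n. D g) = (\<Union>m\<in>{1..n}. B m)"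
    using deg_top_prime_bounds by (fastforce simp: B_def D_def)
  also have "card \<dots> \<le> (\<Sum>m\<in>{1..n}. card (B m))" by (rule card_UN_le) simp
  also have "\<dots> \<le> (\<Sum>m\<in>{1..n}. Pcount dp m ^ 2 * (if 2 * m \<le> n then card (smooth m (n - 2 * m)) else 0))"
    unfolding B_def by (intro sum_mono card_top_prime_pairs_le)
  finally show ?thesis .
qed

end

lemma eventually_bound_imp_bound:
  fixes a b :: "nat \<Rightarrow> real"
  assumes "eventually (\<lambda>n. a n \<le> C * b n) sequentially" "\<And>n. b n > 0"
  obtains B where "B > 0" "\<And>n. a n \<le> B * b n"
proof -
  obtain N where N: "\<And>n. n \<ge> N \<Longrightarrow> a n \<le> C * b n"
    using assms(1) by (auto simp: eventually_sequentially)
  define B where "B = max (max C 1) (Max ((\<lambda>n. a n / b n) ` {..<N}))"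
  have "a n \<le> B * b n" for n
  proof (cases "n < N")
    case True
    then have "a n / b n \<le> Max ((\<lambda>n. a n / b n) ` {..<N})" by (intro Max_ge) auto
    then have "a n / b n \<le> B" by (simp add: B_def)
    then show ?thesis using assms(2)[of n] by (simp add: divide_le_eq)
  next
    case False
    then have "a n \<le> C * b n" using N by simp
    also have "\<dots> \<le> B * b n" using assms(2)[of n] by (intro mult_right_mono) (auto simp: B_def)
    finally show ?thesis .
  qed
  moreover have "B > 0" by (simp add: B_def)
  ultimately show ?thesis using that by blast
qed

lemma conv_radius_mono_norm:
  fixes a b :: "nat \<Rightarrow> complex"
  assumes "\<And>n. norm (a n) \<le> norm (b n)"
  shows "conv_radius b \<le> conv_radius a"
proof (rule conv_radius_geI_ex')
  fix r :: real assume r: "0 < r" "ereal r < conv_radius b"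
  have "summable (\<lambda>n. norm (b n * of_real r ^ n))"
    by (rule abs_summable_in_conv_radius) (use r in simp)
  then have "summable (\<lambda>n. norm (a n * of_real r ^ n))"
    by (rule summable_comparison_test[rotated])
       (use assms r in \<open>auto simp: norm_mult norm_power intro!: mult_right_mono\<close>)
  then show "summable (\<lambda>n. a n * of_real r ^ n)" by (rule summable_norm_cancel)
qed

lemma conv_radius_ge_geometric:
  fixes a :: "nat \<Rightarrow> complex"
  assumes "\<And>n. norm (a n) \<le> B * r ^ n" "r > 0"
  shows "ereal (1 / r) \<le> conv_radius a"
proof (rule conv_radius_geI_ex')
  fix s :: real assume s: "0 < s" "ereal s < ereal (1 / r)"
  then have "r * s < 1" using assms(2) by (simp add: field_simps)
  then have "summable (\<lambda>n. B * (r * s) ^ n)"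
    using s assms(2) by (intro summable_mult summable_geometric) simp
  then have "summable (\<lambda>n. norm (a n * of_real s ^ n))"
    by (rule summable_comparison_test[rotated])
       (use assms s in \<open>auto simp: norm_mult norm_power power_mult_distrib mult.assoc
                               intro!: mult_right_mono\<close>)
  then show "summable (\<lambda>n. a n * of_real s ^ n)" by (rule summable_norm_cancel)
qed

lemma poly_over_exp_tendsto_0:
  fixes q :: real
  assumes "q > 1"
  shows "(\<lambda>k. (real k + 1) ^ p / q ^ k) \<longlonglongrightarrow> 0"
proof (cases "p = 0")
  case True
  have "(\<lambda>k. (1 / q) ^ k) \<longlonglongrightarrow> 0" using assms by (intro LIMSEQ_power_zero) simp
  then show ?thesis using True by (simp add: power_divide)
next
  case False
  define s where "s = q powr (1 / real p)"
  have s: "s > 1" using assms False powr_less_mono[of 0 "1 / real p" q] by (simp add: s_def)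
  have s_p: "s ^ p = q" using assms False by (simp add: s_def powr_realpow[symmetric] powr_powr)
  have "(\<lambda>k. of_nat k * (1 / s) ^ k + (1 / s) ^ k) \<longlonglongrightarrow> (0::real)"
    using s by (intro tendsto_add_zero powser_times_n_limit_0 LIMSEQ_power_zero) simp_all
  moreover have "of_nat k * (1 / s) ^ k + (1 / s) ^ k = (real k + 1) / s ^ k" for k
    by (simp add: power_divide add_divide_distrib)
  ultimately have "(\<lambda>k. ((real k + 1) / s ^ k) ^ p) \<longlonglongrightarrow> 0 ^ p"
    by (intro tendsto_power) simp
  moreover have "((real k + 1) / s ^ k) ^ p = (real k + 1) ^ p / q ^ k" for k
    by (simp add: power_divide flip: power_mult s_p) (simp add: mult.commute)
  ultimately show ?thesis using False by (simp add: power_0_left)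
qed

text \<open>A variant of the Silverman--Toeplitz theorem.\<close>

lemma weighted_sum_tendsto_zero:
  fixes x p :: "nat \<Rightarrow> real" and w :: "nat \<Rightarrow> nat \<Rightarrow> real"
  assumes small: "\<And>\<epsilon>. \<epsilon> > 0 \<Longrightarrow> eventually (\<lambda>m. \<bar>x m\<bar> \<le> \<epsilon> * p m) sequentially"
    and w_lim: "\<And>m. (\<lambda>n. w m n) \<longlonglongrightarrow> 0"
    and nonneg: "\<And>m. 0 \<le> p m" "\<And>m n. 0 \<le> w m n"
    and bounded: "\<And>n. (\<Sum>m\<in>A n. p m * w m n) \<le> B"
    and finite: "\<And>n. finite (A n)"
  shows "(\<lambda>n. \<Sum>m\<in>A n. x m * w m n) \<longlonglongrightarrow> 0"
proof (rule LIMSEQ_I)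
  fix \<epsilon> :: real assume "\<epsilon> > 0"
  define \<epsilon>' where "\<epsilon>' = \<epsilon> / (2 * (\<bar>B\<bar> + 1))"
  have "\<epsilon>' > 0" "\<epsilon>' * \<bar>B\<bar> < \<epsilon> / 2"
    using \<open>\<epsilon> > 0\<close> by (auto simp: \<epsilon>'_def field_simps)
  obtain M where M: "\<And>m. m \<ge> M \<Longrightarrow> \<bar>x m\<bar> \<le> \<epsilon>' * p m"
    using small[OF \<open>\<epsilon>' > 0\<close>] by (auto simp: eventually_sequentially)
  have "(\<lambda>n. \<Sum>m<M. \<bar>x m\<bar> * w m n) \<longlonglongrightarrow> 0"
    by (intro tendsto_null_sum tendsto_mult_right_zero w_lim)
  then obtain N where N: "\<And>n. n \<ge> N \<Longrightarrow> norm ((\<Sum>m<M. \<bar>x m\<bar> * w m n) - 0) < \<epsilon> / 2"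
    using LIMSEQ_D[of _ 0 "\<epsilon> / 2"] \<open>\<epsilon> > 0\<close> by (meson half_gt_zero)
  have "norm (\<Sum>m\<in>A n. x m * w m n) < \<epsilon>" if "n \<ge> N" for n
  proof -
    have "norm (\<Sum>m\<in>A n. x m * w m n) \<le> (\<Sum>m\<in>A n. \<bar>x m\<bar> * w m n)"
      using nonneg by (auto intro: order_trans[OF sum_abs] simp: abs_mult)
    also have "\<dots> \<le> (\<Sum>m\<in>A n. (if m < M then \<bar>x m\<bar> * w m n else 0) + \<epsilon>' * (p m * w m n))"
    proof (intro sum_mono)
      fix m
      have "\<not> m < M \<Longrightarrow> \<bar>x m\<bar> * w m n \<le> \<epsilon>' * p m * w m n"
        using M[of m] nonneg(2) by (intro mult_right_mono) auto
      then show "\<bar>x m\<bar> * w m n \<le> (if m < M then \<bar>x m\<bar> * w m n else 0) + \<epsilon>' * (p m * w m n)"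
        using nonneg \<open>\<epsilon>' > 0\<close> by (auto simp: mult.assoc)
    qed
    also have "\<dots> = (\<Sum>m\<in>A n \<inter> {..<M}. \<bar>x m\<bar> * w m n) + \<epsilon>' * (\<Sum>m\<in>A n. p m * w m n)"
      by (simp add: sum.distrib sum_distrib_left sum.If_cases[OF finite] Int_def)
    also have "\<dots> \<le> (\<Sum>m<M. \<bar>x m\<bar> * w m n) + \<epsilon>' * \<bar>B\<bar>"
      using bounded[of n] nonneg \<open>\<epsilon>' > 0\<close>
      by (intro add_mono sum_mono2 mult_left_mono) auto
    also have "\<dots> < \<epsilon>"
      using N[OF that] \<open>\<epsilon>' * \<bar>B\<bar> < \<epsilon> / 2\<close> by (simp add: abs_less_iff)
    finally show ?thesis .
  qed
  then show "\<exists>N. \<forall>n\<ge>N. norm ((\<Sum>m\<in>A n. x m * w m n) - 0) < \<epsilon>" by auto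
qed

section \<open>Coefficients of logarithmic derivatives\<close>

lemma finite_set_gap:
  fixes M :: "real set"
  assumes "finite M" "a < b"
  obtains r1 r2 where "a < r1" "r1 < r2" "r2 < b" "\<And>m. m \<in> M \<Longrightarrow> m < r1 \<or> r2 < m"
proof -
  define m0 where "m0 = Min (insert b {m\<in>M. a < m})"
  have fin: "finite (insert b {m\<in>M. a < m})" using assms by simp
  have "a < m0" unfolding m0_def using fin assms by (subst Min_gr_iff) auto
  have "m0 \<le> b" unfolding m0_def using fin by (intro Min_le) auto
  define r1 where "r1 = a + (m0 - a) / 3"
  define r2 where "r2 = a + 2 * (m0 - a) / 3"
  have "m < r1 \<or> r2 < m" if "m \<in> M" for m
  proof (cases "a < m")
    case True
    then have "m0 \<le> m" unfolding m0_def using fin that by (intro Min_le) auto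
    with \<open>a < m0\<close> show ?thesis unfolding r2_def by (simp add: field_simps)
  next
    case False
    with \<open>a < m0\<close> show ?thesis unfolding r1_def by (simp add: field_simps)
  qed
  moreover have "a < r1" "r1 < r2" "r2 < b"
    using \<open>a < m0\<close> \<open>m0 \<le> b\<close> by (auto simp: r1_def r2_def field_simps)
  ultimately show ?thesis using that by blast
qed

lemma holomorphic_zero_free_annulus:
  fixes F :: "complex \<Rightarrow> complex"
  assumes holF: "F holomorphic_on ball 0 R" and F0: "F 0 \<noteq> 0" and a: "0 < a" "a < R"
  obtains r1 r2 where "a < r1" "r1 < r2" "r2 < R"
    "finite {z \<in> ball 0 r2. F z = 0}" "{z \<in> ball 0 r2. F z = 0} \<subseteq> ball 0 r1"
proof -
  define r3 where "r3 = (a + R) / 2"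
  have r3: "a < r3" "r3 < R" using a by (auto simp: r3_def)
  have "finite {z \<in> cball 0 r3. F z = 0}"
  proof (cases "F constant_on ball 0 R")
    case True
    then have "F z = F 0" if "z \<in> ball 0 R" for z
      using a that by (auto simp: constant_on_def)
    then have "{z \<in> cball 0 r3. F z = 0} = {}" using F0 r3 by fastforce
    then show ?thesis by (simp only: finite.emptyI)
  next
    case False
    show ?thesis
      by (rule holomorphic_compact_finite_zeros[OF holF]) (use False r3 in auto)
  qed
  moreover obtain r1 r2 where r12: "a < r1" "r1 < r2" "r2 < r3"
    and gap: "\<And>m. m \<in> norm ` {z \<in> cball 0 r3. F z = 0} \<Longrightarrow> m < r1 \<or> r2 < m"
    using finite_set_gap[OF finite_imageI r3(1)] calculation by blast
  moreover have "{z \<in> ball 0 r2. F z = 0} \<subseteq> {z \<in> cball 0 r3. F z = 0}" using r12 by auto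
  moreover have "{z \<in> ball 0 r2. F z = 0} \<subseteq> ball 0 r1"
  proof
    fix z assume z: "z \<in> {z \<in> ball 0 r2. F z = 0}"
    then have "norm z < r1 \<or> r2 < norm z" using r12 by (intro gap) auto
    then show "z \<in> ball 0 r1" using z by auto
  qed
  ultimately show ?thesis using that r3 by (meson finite_subset less_trans)
qed

lemma residue_logderiv_over_power:
  fixes F :: "complex \<Rightarrow> complex"
  assumes holF: "F holomorphic_on ball \<zeta> e" and Fz: "F \<zeta> = 0" and e: "e > 0"
    and zero_notin: "0 \<notin> ball \<zeta> e"
    and nz: "\<And>w. w \<in> ball \<zeta> e \<Longrightarrow> w \<noteq> \<zeta> \<Longrightarrow> F w \<noteq> 0"
  shows "residue (\<lambda>w. w * deriv F w / F w / w ^ Suc n) \<zeta> = of_int (zorder F \<zeta>) / \<zeta> ^ n"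
proof -
  define \<gamma> where "\<gamma> = circlepath \<zeta> (e / 2)"
  define h where "h = (\<lambda>w::complex. 1 / w ^ n)"
  define f where "f = (\<lambda>w. w * deriv F w / F w / w ^ Suc n)"
  have zeros: "{w\<in>ball \<zeta> e. F w = 0 \<or> w \<in> {}} = {\<zeta>}"
    using nz Fz e by auto
  have "contour_integral \<gamma> (\<lambda>x. deriv F x * h x / F x) = 2 * pi * \<i> *
          (\<Sum>p\<in>{w\<in>ball \<zeta> e. F w = 0 \<or> w \<in> {}}. winding_number \<gamma> p * h p * of_int (zorder F p))"
  proof (rule argument_principle)
    show "h holomorphic_on ball \<zeta> e" unfolding h_def using zero_notin by (auto intro!: holomorphic_intros)
    show "path_image \<gamma> \<subseteq> ball \<zeta> e - {w\<in>ball \<zeta> e. F w = 0 \<or> w \<in> {}}"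
      using e nz by (auto simp: \<gamma>_def dist_norm)
    show "\<forall>z. z \<notin> ball \<zeta> e \<longrightarrow> winding_number \<gamma> z = 0"
      using e winding_number_zero_outside[of \<gamma> "cball \<zeta> (e/2)"] by (auto simp: \<gamma>_def)
    show "finite {w\<in>ball \<zeta> e. F w = 0 \<or> w \<in> {}}" by (simp only: zeros) simp
  qed (use holF in \<open>auto simp: \<gamma>_def\<close>)
  also have "\<dots> = 2 * pi * \<i> * (h \<zeta> * of_int (zorder F \<zeta>))"
    using e unfolding zeros by (simp add: \<gamma>_def winding_number_circlepath)
  finally have integral: "contour_integral \<gamma> (\<lambda>x. deriv F x * h x / F x)
                            = 2 * pi * \<i> * (h \<zeta> * of_int (zorder F \<zeta>))" .
  have "(f has_contour_integral 2 * pi * \<i> * residue f \<zeta>) \<gamma>"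
    unfolding \<gamma>_def
  proof (rule base_residue[of "ball \<zeta> e"])
    have "deriv F holomorphic_on ball \<zeta> e" by (intro holomorphic_deriv holF) auto
    then show "f holomorphic_on ball \<zeta> e - {\<zeta>}"
      unfolding f_def using holF nz zero_notin
      by (intro holomorphic_intros) (auto intro: holomorphic_on_subset)
  qed (use e in auto)
  then have "((\<lambda>x. deriv F x * h x / F x) has_contour_integral 2 * pi * \<i> * residue f \<zeta>) \<gamma>"
  proof (rule has_contour_integral_eq)
    fix x assume "x \<in> path_image \<gamma>"
    then have "x \<noteq> 0" using e zero_notin by (auto simp: \<gamma>_def dist_norm)
    then show "f x = deriv F x * h x / F x" by (simp add: f_def h_def field_simps)
  qed
  then have "residue f \<zeta> = h \<zeta> * of_int (zorder F \<zeta>)"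
    using integral contour_integral_unique by fastforce
  then show ?thesis by (simp add: f_def h_def)
qed

text \<open>Cauchy's estimate on the circle of radius \<open>r\<^sub>1\<close> gives \<open>r\<^sub>1\<^sup>-\<^sup>n \<le> q\<^sup>n\<close> once the residues
  at the singularities inside it are subtracted.\<close>

lemma fps_coeff_bound_from_residues:
  fixes H :: "complex \<Rightarrow> complex" and K :: "complex fps" and W :: "complex \<Rightarrow> real"
  assumes expansion: "H has_fps_expansion K"
    and holH: "H holomorphic_on ball 0 r2 - S"
    and S: "finite S" "S \<subseteq> ball 0 r1" "0 \<notin> S"
    and r: "0 < r1" "r1 < r2" "1 / r1 \<le> q"
    and residues: "\<And>\<zeta> n. \<zeta> \<in> S \<Longrightarrow> norm (residue (\<lambda>w. H w / w ^ Suc n) \<zeta>) \<le> W \<zeta> * q ^ n"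
  obtains C where "\<And>n. norm (K $ n) \<le> C * q ^ n"
proof -
  have sphere: "sphere 0 r1 \<subseteq> ball 0 r2 - S" using S r by auto
  have "compact (H ` sphere 0 r1)"
    by (intro compact_continuous_image holomorphic_on_imp_continuous_on
              holomorphic_on_subset[OF holH sphere]) auto
  then have "bounded (H ` sphere 0 r1)" by (rule compact_imp_bounded)
  then obtain C0 where C0: "\<And>z. z \<in> sphere 0 r1 \<Longrightarrow> norm (H z) \<le> C0"
    unfolding bounded_iff by (metis image_eqI)
  have "complex_of_real r1 \<in> sphere 0 r1" using r by simp
  then have "C0 \<ge> 0" using C0 norm_ge_zero order_trans by blast
  have "norm (K $ n) \<le> (C0 + sum W S) * q ^ n" for n
  proof -
    let ?R = "\<Sum>\<zeta>\<in>S. residue (\<lambda>w. H w / w ^ Suc n) \<zeta>"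
    have "norm ((deriv ^^ n) H 0 / fact n + ?R) \<le> C0 / r1 ^ n"
      by (rule fps_coeff_residues_bound[where A = "ball 0 r2" and k = "{}"])
         (use holH S r C0 \<open>C0 \<ge> 0\<close> in auto)
    then have "norm (K $ n + ?R) \<le> C0 / r1 ^ n"
      using fps_nth_fps_expansion[OF expansion] by simp
    also have "C0 / r1 ^ n = C0 * (1 / r1) ^ n" by (simp add: power_divide)
    also have "\<dots> \<le> C0 * q ^ n"
      using r \<open>C0 \<ge> 0\<close> by (intro mult_left_mono power_mono) auto
    finally have coeff: "norm (K $ n + ?R) \<le> C0 * q ^ n" .
    have "norm ?R \<le> (\<Sum>\<zeta>\<in>S. norm (residue (\<lambda>w. H w / w ^ Suc n) \<zeta>))"
      by (rule norm_sum)
    also have "\<dots> \<le> sum W S * q ^ n"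
      unfolding sum_distrib_right by (intro sum_mono residues)
    finally show ?thesis
      using coeff norm_triangle_ineq4[of "K $ n + ?R" ?R] by (simp add: algebra_simps)
  qed
  then show ?thesis using that by blast
qed

lemma logderiv_has_fps_expansion:
  fixes F :: "complex \<Rightarrow> complex" and K :: "complex fps"
  assumes "isCont F 0" "F 0 \<noteq> 0" and q: "q > 0" and rad_K: "ereal (1 / q) \<le> fps_conv_radius K"
    and logderiv: "\<And>z. norm z < 1 / q \<Longrightarrow> F z \<noteq> 0 \<Longrightarrow> z * deriv F z / F z = eval_fps K z"
  shows "(\<lambda>z. z * deriv F z / F z) has_fps_expansion K"
  unfolding has_fps_expansion_def
proof
  show "fps_conv_radius K > 0" using rad_K q by (meson ereal_less(2) less_le_trans zero_less_divide_1_iff)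
  obtain \<epsilon> where \<epsilon>: "\<epsilon> > 0" "\<And>y. dist 0 y < \<epsilon> \<Longrightarrow> F y \<noteq> 0"
    using continuous_at_avoid[of 0 F 0] assms(1,2) by auto
  show "eventually (\<lambda>z. eval_fps K z = z * deriv F z / F z) (nhds 0)"
    unfolding eventually_nhds_metric
  proof (intro exI[of _ "min \<epsilon> (1/q)"] conjI allI impI)
    show "min \<epsilon> (1 / q) > 0" using \<epsilon> q by simp
    fix z :: complex assume "dist z 0 < min \<epsilon> (1 / q)"
    then show "eval_fps K z = z * deriv F z / F z"
      using \<epsilon>(2)[of z] by (intro logderiv[symmetric]) (auto simp: dist_commute)
  qed
qed

text \<open>Zeros \<open>\<zeta>\<close> of \<open>F\<close> with \<open>|\<zeta>| \<ge> 1/q\<close> contribute the residue \<open>zorder F \<zeta> / \<zeta>\<^sup>n\<close>, of size at most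
  \<open>q\<^sup>n\<close>; zeros inside the radius \<open>1/q\<close> contribute nothing, as \<open>z F'/F\<close> is analytic there.\<close>

lemma residue_logderiv_over_power_le:
  fixes F :: "complex \<Rightarrow> complex" and K :: "complex fps"
  assumes holF: "F holomorphic_on ball 0 r" and zeros: "finite {z \<in> ball 0 r. F z = 0}"
    and F0: "F 0 \<noteq> 0" and \<zeta>: "\<zeta> \<in> ball 0 r" "F \<zeta> = 0"
    and q: "q > 0" and rad_K: "ereal (1 / q) \<le> fps_conv_radius K"
    and logderiv: "\<And>z. norm z < 1 / q \<Longrightarrow> F z \<noteq> 0 \<Longrightarrow> z * deriv F z / F z = eval_fps K z"
  shows "norm (residue (\<lambda>w. w * deriv F w / F w / w ^ Suc n) \<zeta>) \<le> real_of_int \<bar>zorder F \<zeta>\<bar> * q ^ n"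
proof (cases "norm \<zeta> < 1 / q")
  case True
  have "eventually (\<lambda>w. w \<notin> {z \<in> ball 0 r. F z = 0}) (at \<zeta>)"
    using islimpt_finite[OF zeros] islimpt_iff_eventually by blast
  moreover have "eventually (\<lambda>w. w \<in> ball 0 (1/q) \<inter> ball 0 r) (at \<zeta>)"
    by (rule eventually_at_in_open') (use True \<zeta> in auto)
  ultimately have "eventually (\<lambda>w. w * deriv F w / F w / w ^ Suc n = eval_fps K w / w ^ Suc n) (at \<zeta>)"
  proof eventually_elim
    case (elim w)
    then have "w * deriv F w / F w = eval_fps K w" by (intro logderiv) auto
    then show ?case by simp
  qed
  then have "residue (\<lambda>w. w * deriv F w / F w / w ^ Suc n) \<zeta>
           = residue (\<lambda>w. eval_fps K w / w ^ Suc n) \<zeta>"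
    by (rule residue_cong) simp
  also have "\<dots> = 0"
  proof (rule residue_holo[of "ball 0 (1/q) - {0}"])
    have "ball 0 (1/q) \<subseteq> eball 0 (fps_conv_radius K)"
      by (auto intro!: order.strict_trans2[OF _ rad_K])
    then show "(\<lambda>w. eval_fps K w / w ^ Suc n) holomorphic_on ball 0 (1 / q) - {0}"
      by (intro holomorphic_on_divide holomorphic_on_eval_fps holomorphic_intros) auto
  qed (use True F0 \<zeta> in auto)
  finally show ?thesis using q by simp
next
  case False
  have "open (ball 0 r - {0})" "\<zeta> \<in> ball 0 r - {0}" using \<zeta> F0 by auto
  then obtain e where e: "e > 0"
    "\<forall>w\<in>cball \<zeta> e. w \<in> ball 0 r - {0} \<and> (w \<noteq> \<zeta> \<longrightarrow> w \<notin> {z \<in> ball 0 r. F z = 0})"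
    using finite_cball_avoid[OF _ zeros] by blast
  then have ball_e: "ball \<zeta> e \<subseteq> ball 0 r - {0}" by fastforce
  have residue: "residue (\<lambda>w. w * deriv F w / F w / w ^ Suc n) \<zeta> = of_int (zorder F \<zeta>) / \<zeta> ^ n"
  proof (rule residue_logderiv_over_power)
    show "F holomorphic_on ball \<zeta> e" using ball_e by (intro holomorphic_on_subset[OF holF]) auto
    show "0 \<notin> ball \<zeta> e" using ball_e by blast
    show "F w \<noteq> 0" if "w \<in> ball \<zeta> e" "w \<noteq> \<zeta>" for w
      using e(2) that ball_e by fastforce
  qed (use e \<zeta> in auto)
  have "(1 / norm \<zeta>) ^ n \<le> q ^ n"
  proof (intro power_mono)
    have "1 / q \<le> norm \<zeta>" using False by simp
    moreover from this have "norm \<zeta> > 0" using q by (meson less_le_trans zero_less_divide_1_iff)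
    ultimately show "1 / norm \<zeta> \<le> q" using q by (simp add: field_simps)
  qed simp
  then have "real_of_int \<bar>zorder F \<zeta>\<bar> * (1 / norm \<zeta>) ^ n \<le> real_of_int \<bar>zorder F \<zeta>\<bar> * q ^ n"
    by (intro mult_left_mono) auto
  then show ?thesis unfolding residue by (simp add: norm_divide norm_power power_divide)
qed

lemma logderiv_fps_coeff_bound:
  fixes E K :: "complex fps" and q :: real
  assumes q: "q > 0"
    and rad_E: "ereal (1 / q) < fps_conv_radius E"
    and rad_K: "ereal (1 / q) \<le> fps_conv_radius K"
    and E0: "E $ 0 \<noteq> 0"
    and logderiv: "fps_X * fps_deriv E = E * K"
  obtains C where "\<And>n. norm (K $ n) \<le> C * q ^ n"
proof -
  obtain R where R: "1 / q < R" "ereal R < fps_conv_radius E"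
    using ereal_dense2[OF rad_E] by auto
  have "0 < R" using R(1) q by (meson less_trans zero_less_divide_1_iff)
  define F where "F = eval_fps E"
  have holF: "F holomorphic_on ball 0 R"
    unfolding F_def by (intro holomorphic_on_eval_fps) (auto intro!: order.strict_trans[OF _ R(2)])
  have F0: "F 0 \<noteq> 0" using E0 by (simp add: F_def eval_fps_at_0)
  have logderiv_eq: "z * deriv F z / F z = eval_fps K z" if "norm z < 1 / q" "F z \<noteq> 0" for z
  proof -
    have zq: "ereal (norm z) < ereal (1 / q)" using that by simp
    have zE: "ereal (norm z) < fps_conv_radius E" using zq rad_E by (rule less_trans)
    have zK: "ereal (norm z) < fps_conv_radius K" using zq rad_K by (rule less_le_trans)
    have "eval_fps (fps_X * fps_deriv E) z = eval_fps (E * K) z"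
      by (simp only: logderiv)
    then have "z * deriv F z = F z * eval_fps K z"
      using zE zK
      by (simp add: F_def eval_fps_mult eval_fps_deriv less_le_trans[OF _ fps_conv_radius_deriv])
    then show ?thesis using that by (simp add: field_simps)
  qed
  have "isCont F 0" using holF \<open>0 < R\<close>
    by (intro holomorphic_on_imp_continuous_on[THEN continuous_on_interior]) auto
  have expansion: "(\<lambda>z. z * deriv F z / F z) has_fps_expansion K"
    using logderiv_eq by (rule logderiv_has_fps_expansion[OF \<open>isCont F 0\<close> F0 q rad_K])
  obtain r1 r2 where r: "1 / q < r1" "r1 < r2" "r2 < R"
    and finite_zeros: "finite {z \<in> ball 0 r2. F z = 0}"
    and zeros_inside: "{z \<in> ball 0 r2. F z = 0} \<subseteq> ball 0 r1"
    using holomorphic_zero_free_annulus[OF holF F0, of "1 / q"] q R by auto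
  define S where "S = {z \<in> ball 0 r2. F z = 0}"
  have holF2: "F holomorphic_on ball 0 r2" using holF r by (auto intro: holomorphic_on_subset)
  have holH: "(\<lambda>z. z * deriv F z / F z) holomorphic_on ball 0 r2 - S"
  proof -
    have "deriv F holomorphic_on ball 0 r2 - S"
      by (intro holomorphic_on_subset[OF holomorphic_deriv[OF holF2]]) auto
    moreover have "open (ball 0 r2 - S)"
      using finite_zeros by (intro open_Diff finite_imp_closed) (auto simp: S_def)
    ultimately show ?thesis
      unfolding S_def using holF2 by (intro holomorphic_intros) (auto intro: holomorphic_on_subset)
  qed
  have S: "finite S" "S \<subseteq> ball 0 r1" "0 \<notin> S"
    using finite_zeros zeros_inside F0 by (auto simp: S_def)
  have "0 < r1" using r(1) q by (meson less_trans zero_less_divide_1_iff)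
  then have "1 / r1 \<le> q" using r(1) q by (simp add: field_simps)
  have residues: "norm (residue (\<lambda>w. w * deriv F w / F w / w ^ Suc n) \<zeta>)
                   \<le> real_of_int \<bar>zorder F \<zeta>\<bar> * q ^ n" if "\<zeta> \<in> S" for \<zeta> n
  proof (rule residue_logderiv_over_power_le[OF holF2 finite_zeros F0 _ _ q rad_K])
    show "\<zeta> \<in> ball 0 r2" "F \<zeta> = 0" using that by (auto simp: S_def)
  qed (rule logderiv_eq)
  show ?thesis
    by (rule fps_coeff_bound_from_residues[OF expansion holH S \<open>0 < r1\<close> r(2) \<open>1 / r1 \<le> q\<close>
          residues that])
qed

section \<open>Semigroups satisfying Axiom \<open>A\<^sup>#\<close>\<close>

locale axiom_A_semigroup = arith_semigroup dp for dp :: "'p \<Rightarrow> nat" +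
  fixes c q \<eta> :: real
  assumes q_gt_1: "q > 1" and eta: "0 \<le> \<eta>" "\<eta> < 1"
    and Asharp: "(\<lambda>n. real (Gcount dp n) - c * q ^ n) \<in> O(\<lambda>n. q powr (\<eta> * real n))"
begin

definition rho :: real where
  "rho = q powr \<eta>"

lemma q_pos: "q > 0"
  using q_gt_1 by simp

lemma rho_ge_1: "rho \<ge> 1"
  using q_gt_1 eta by (simp add: rho_def ge_one_powr_ge_zero)

lemma rho_less_q: "rho < q"
  using q_gt_1 eta powr_less_mono[of \<eta> 1 q] by (simp add: rho_def)

lemma Gcount_approx:
  obtains K where "K > 0" "eventually (\<lambda>n. \<bar>real (Gcount dp n) - c * q ^ n\<bar> \<le> K * rho ^ n) sequentially"
proof -
  have rho_power: "q powr (\<eta> * real n) = rho ^ n" for n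
    using q_gt_1 by (simp add: rho_def powr_powr[symmetric] powr_realpow)
  from Asharp obtain K where K: "K > 0"
    "eventually (\<lambda>n. norm (real (Gcount dp n) - c * q ^ n) \<le> K * norm (q powr (\<eta> * real n))) sequentially"
    by (elim landau_o.bigE)
  from K(2) have "eventually (\<lambda>n. \<bar>real (Gcount dp n) - c * q ^ n\<bar> \<le> K * rho ^ n) sequentially"
    by eventually_elim (use rho_ge_1 in \<open>simp add: rho_power power_abs\<close>)
  with K(1) show ?thesis by (rule that)
qed

lemma Gcount_le:
  obtains B where "B > 0" "\<And>n. real (Gcount dp n) \<le> B * q ^ n"
proof -
  obtain K where K: "K > 0"
    "eventually (\<lambda>n. \<bar>real (Gcount dp n) - c * q ^ n\<bar> \<le> K * rho ^ n) sequentially"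
    using Gcount_approx by blast
  from K(2) have "eventually (\<lambda>n. real (Gcount dp n) \<le> (\<bar>c\<bar> + K) * q ^ n) sequentially"
  proof eventually_elim
    case (elim n)
    have "K * rho ^ n \<le> K * q ^ n"
      using K(1) rho_less_q rho_ge_1 by (intro mult_left_mono power_mono) auto
    moreover have "c * q ^ n \<le> \<bar>c\<bar> * q ^ n" using q_pos by (intro mult_right_mono) auto
    ultimately show ?case using elim by (simp add: algebra_simps abs_le_iff)
  qed
  then show ?thesis
    by (rule eventually_bound_imp_bound[OF _ _ that]) (simp add: q_pos)
qed

lemma Gcount_minus_main_term_over_power_tendsto_0:
  "(\<lambda>n. (real (Gcount dp n) - c * q ^ n) / q ^ n) \<longlonglongrightarrow> 0"
proof -
  obtain K where K: "K > 0"
    "eventually (\<lambda>n. \<bar>real (Gcount dp n) - c * q ^ n\<bar> \<le> K * rho ^ n) sequentially"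
    using Gcount_approx by blast
  have "(\<lambda>n. K * (rho / q) ^ n) \<longlonglongrightarrow> K * 0"
    using rho_less_q rho_ge_1 by (intro tendsto_mult tendsto_const LIMSEQ_power_zero) simp
  then have lim: "(\<lambda>n. K * (rho / q) ^ n) \<longlonglongrightarrow> 0" by simp
  show ?thesis
  proof (rule Lim_null_comparison[OF _ lim])
    show "eventually (\<lambda>n. norm ((real (Gcount dp n) - c * q ^ n) / q ^ n) \<le> K * (rho / q) ^ n) sequentially"
      using K(2) by eventually_elim (use q_pos in \<open>simp add: power_divide divide_right_mono\<close>)
  qed
qed

text \<open>The series \<open>G(z) = \<Sum> Gcount n z\<^sup>n\<close> is the zeta function \<open>Z(z)\<close>; its simple pole at \<open>1/q\<close>
  is removed in \<open>E(z) = (1 - q z) Z(z)\<close>, whose coefficients are \<open>O(\<rho>\<^sup>n)\<close> by Axiom \<open>A\<^sup>#\<close>.\<close>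

definition G_fps :: "complex fps" where
  "G_fps = Abs_fps (\<lambda>n. of_nat (Gcount dp n))"

definition Lambda_fps :: "complex fps" where
  "Lambda_fps = Abs_fps (\<lambda>n. of_nat (Lambda n))"

definition geom_fps :: "complex fps" where
  "geom_fps = Abs_fps (\<lambda>n. if n = 0 then 0 else of_real q ^ n)"

definition E_fps :: "complex fps" where
  "E_fps = G_fps - fps_const (of_real q) * (fps_X * G_fps)"

lemma fps_X_deriv_G_fps: "fps_X * fps_deriv G_fps = G_fps * Lambda_fps"
proof (rule fps_ext)
  fix n
  have "(\<Sum>i=0..n. Gcount dp i * Lambda (n - i)) = (\<Sum>k=0..n. Lambda k * Gcount dp (n - k))"
    by (rule sum.reindex_bij_witness[of _ "\<lambda>k. n - k" "\<lambda>i. n - i"]) auto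
  also have "\<dots> = n * Gcount dp n"
    by (simp add: sum.atLeast_Suc_atMost n_mult_Gcount_eq)
  finally have convolution: "(\<Sum>i=0..n. Gcount dp i * Lambda (n - i)) = n * Gcount dp n" .
  have "(G_fps * Lambda_fps) $ n = (\<Sum>i=0..n. of_nat (Gcount dp i) * of_nat (Lambda (n - i)))"
    by (simp add: fps_mult_nth G_fps_def Lambda_fps_def)
  also have "\<dots> = of_nat (n * Gcount dp n)"
    by (simp only: of_nat_mult[symmetric] of_nat_sum[symmetric] convolution)
  finally show "(fps_X * fps_deriv G_fps) $ n = (G_fps * Lambda_fps) $ n"
    by (cases n) (simp_all add: fps_deriv_nth G_fps_def algebra_simps)
qed

lemma geom_fps_eq: "(1 - fps_const (of_real q) * fps_X) * geom_fps = fps_const (of_real q) * fps_X"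
proof (rule fps_ext)
  fix n
  have "((1 - fps_const (of_real q) * fps_X) * geom_fps) $ n
      = geom_fps $ n - of_real q * (fps_X * geom_fps) $ n"
    by (simp only: left_diff_distrib mult_1 mult.assoc fps_sub_nth fps_mult_left_const_nth)
  then show "((1 - fps_const (of_real q) * fps_X) * geom_fps) $ n = (fps_const (of_real q) * fps_X) $ n"
    by (cases n) (auto simp: geom_fps_def)
qed

lemma fps_X_deriv_E_fps: "fps_X * fps_deriv E_fps = E_fps * (Lambda_fps - geom_fps)"
proof -
  define Q :: "complex fps" where "Q = fps_const (of_real q)"
  have E: "E_fps = (1 - Q * fps_X) * G_fps" by (simp add: E_fps_def Q_def algebra_simps)
  have E': "fps_deriv E_fps = fps_deriv G_fps - Q * (G_fps + fps_X * fps_deriv G_fps)"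
    by (simp add: E_fps_def Q_def fps_deriv_mult)
  have "fps_X * fps_deriv E_fps = (1 - Q * fps_X) * (fps_X * fps_deriv G_fps) - Q * fps_X * G_fps"
    by (simp add: E' algebra_simps)
  also have "\<dots> = (1 - Q * fps_X) * G_fps * Lambda_fps - G_fps * (Q * fps_X)"
    unfolding fps_X_deriv_G_fps by (simp add: algebra_simps)
  also have "\<dots> = (1 - Q * fps_X) * G_fps * Lambda_fps - G_fps * ((1 - Q * fps_X) * geom_fps)"
    by (simp only: Q_def geom_fps_eq)
  also have "\<dots> = E_fps * (Lambda_fps - geom_fps)"
    by (simp add: E algebra_simps)
  finally show ?thesis .
qed

lemma E_fps_nth:
  "E_fps $ n = of_real (real (Gcount dp n) - (if n = 0 then 0 else q * real (Gcount dp (n - 1))))"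
  by (cases n) (simp_all add: E_fps_def G_fps_def)

lemma E_fps_coeff_le:
  obtains B where "B > 0" "\<And>n. norm (E_fps $ n) \<le> B * rho ^ n"
proof -
  obtain K where K: "K > 0"
    "eventually (\<lambda>n. \<bar>real (Gcount dp n) - c * q ^ n\<bar> \<le> K * rho ^ n) sequentially"
    using Gcount_approx by blast
  then obtain N where N: "\<And>n. n \<ge> N \<Longrightarrow> \<bar>real (Gcount dp n) - c * q ^ n\<bar> \<le> K * rho ^ n"
    by (auto simp: eventually_sequentially)
  have "eventually (\<lambda>n. norm (E_fps $ n) \<le> (K * (1 + q)) * rho ^ n) sequentially"
    unfolding eventually_sequentially
  proof (intro exI[of _ "Suc N"] allI impI)
    fix n assume "n \<ge> Suc N"
    then obtain m where m: "n = Suc m" "m \<ge> N" by (cases n) auto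
    have "norm (E_fps $ n) = \<bar>(real (Gcount dp n) - c * q ^ n) - q * (real (Gcount dp m) - c * q ^ m)\<bar>"
      unfolding E_fps_nth norm_of_real using m by (simp add: algebra_simps)
    also have "\<dots> \<le> K * rho ^ n + q * (K * rho ^ m)"
    proof -
      have "\<bar>q * (real (Gcount dp m) - c * q ^ m)\<bar> \<le> q * (K * rho ^ m)"
        using N[of m] m q_pos by (simp add: abs_mult)
      then show ?thesis using N[of n] m by linarith
    qed
    also have "\<dots> \<le> K * rho ^ n + q * (K * rho ^ n)"
      using m rho_ge_1 K(1) q_pos by (auto intro!: mult_left_mono power_increasing)
    finally show "norm (E_fps $ n) \<le> K * (1 + q) * rho ^ n" by (simp add: algebra_simps)
  qed
  then show ?thesis by (rule eventually_bound_imp_bound[OF _ _ that]) (use rho_ge_1 in simp)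
qed

lemma conv_radius_G_fps: "ereal (1 / q) \<le> fps_conv_radius G_fps"
proof -
  obtain B where "\<And>n. real (Gcount dp n) \<le> B * q ^ n" using Gcount_le by blast
  then show ?thesis
    unfolding fps_conv_radius_def G_fps_def by (intro conv_radius_ge_geometric) (use q_pos in auto)
qed

lemma conv_radius_E_fps: "ereal (1 / q) < fps_conv_radius E_fps"
proof -
  obtain B where "\<And>n. norm (E_fps $ n) \<le> B * rho ^ n" using E_fps_coeff_le by blast
  then have "ereal (1 / rho) \<le> fps_conv_radius E_fps"
    unfolding fps_conv_radius_def by (intro conv_radius_ge_geometric) (use rho_ge_1 in auto)
  moreover have "ereal (1 / q) < ereal (1 / rho)" using rho_less_q rho_ge_1 by (simp add: frac_less2)
  ultimately show ?thesis by (simp only: less_le_trans)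
qed

lemma conv_radius_Lambda_fps: "ereal (1 / q) \<le> fps_conv_radius Lambda_fps"
proof -
  have "norm (Lambda_fps $ n) \<le> norm ((fps_X * fps_deriv G_fps) $ n)" for n
  proof -
    have "(fps_X * fps_deriv G_fps) $ n = of_nat (n * Gcount dp n)"
      by (cases n) (simp_all add: fps_deriv_nth G_fps_def algebra_simps)
    moreover have "real (Lambda n) \<le> real (n * Gcount dp n)"
      using Lambda_le_n_mult_Gcount by (simp only: of_nat_le_iff)
    ultimately show ?thesis by (simp only: norm_of_nat Lambda_fps_def fps_nth_Abs_fps)
  qed
  then have "fps_conv_radius (fps_X * fps_deriv G_fps) \<le> fps_conv_radius Lambda_fps"
    unfolding fps_conv_radius_def by (rule conv_radius_mono_norm)
  moreover have "ereal (1 / q) \<le> fps_conv_radius (fps_X * fps_deriv G_fps)"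
    using fps_conv_radius_mult[of "fps_X :: complex fps" "fps_deriv G_fps"]
      fps_conv_radius_deriv[of G_fps] conv_radius_G_fps
    by (simp add: min_def split: if_splits)
  ultimately show ?thesis by simp
qed

lemma conv_radius_geom_fps: "ereal (1 / q) \<le> fps_conv_radius geom_fps"
  unfolding fps_conv_radius_def
  by (rule conv_radius_ge_geometric[of _ 1]) (use q_pos in \<open>auto simp: geom_fps_def norm_power\<close>)

lemma Lambda_le_geometric:
  obtains D where "\<And>n. real (Lambda n) \<le> D * q ^ n"
proof -
  have "ereal (1 / q) \<le> fps_conv_radius (Lambda_fps - geom_fps)"
    using fps_conv_radius_diff[of Lambda_fps geom_fps] conv_radius_Lambda_fps conv_radius_geom_fps
    by (simp add: min_def split: if_splits)
  moreover have "E_fps $ 0 \<noteq> 0" by (simp add: E_fps_nth Gcount_0)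
  ultimately obtain C where C: "\<And>n. norm ((Lambda_fps - geom_fps) $ n) \<le> C * q ^ n"
    using logderiv_fps_coeff_bound[OF q_pos conv_radius_E_fps _ _ fps_X_deriv_E_fps] by blast
  have "real (Lambda n) \<le> (C + 1) * q ^ n" for n
  proof (cases "n = 0")
    case True
    then show ?thesis using norm_ge_zero order_trans[OF _ C[of 0]] by simp
  next
    case False
    then have "(Lambda_fps - geom_fps) $ n = of_real (real (Lambda n) - q ^ n)"
      by (simp add: Lambda_fps_def geom_fps_def)
    then have "\<bar>real (Lambda n) - q ^ n\<bar> \<le> C * q ^ n"
      using C[of n] by (simp only: norm_of_real)
    then show ?thesis by (simp add: algebra_simps)
  qed
  then show ?thesis by (rule that)
qed

lemma Pcount_le:
  obtains D where "\<And>m. m \<ge> 1 \<Longrightarrow> real (Pcount dp m) \<le> D * q ^ m / real m"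
proof -
  obtain D where D: "\<And>n. real (Lambda n) \<le> D * q ^ n" using Lambda_le_geometric by blast
  have "real (Pcount dp m) \<le> D * q ^ m / real m" if "m \<ge> 1" for m
  proof -
    have "real m * real (Pcount dp m) \<le> real (Lambda m)"
      using n_mult_Pcount_le_Lambda[of m] by (simp flip: of_nat_mult)
    also have "\<dots> \<le> D * q ^ m" by (rule D)
    finally show ?thesis using that by (simp add: field_simps)
  qed
  then show ?thesis by (rule that)
qed

lemma smooth_over_power_tendsto_0: "(\<lambda>k. real (card (smooth m k)) / q ^ k) \<longlonglongrightarrow> 0"
proof (rule tendsto_sandwich[of "\<lambda>_. 0" _ _ "\<lambda>k. (real k + 1) ^ card (primes_upto m) / q ^ k"])
  have "real (card (smooth m k)) \<le> real ((k + 1) ^ card (primes_upto m))" for k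
    using card_smooth_le by (simp only: of_nat_le_iff)
  then have "real (card (smooth m k)) \<le> (real k + 1) ^ card (primes_upto m)" for k
    by (simp add: add.commute)
  then show "eventually (\<lambda>k. real (card (smooth m k)) / q ^ k
                            \<le> (real k + 1) ^ card (primes_upto m) / q ^ k) sequentially"
    using q_pos by (intro always_eventually allI divide_right_mono) auto
qed (use q_pos poly_over_exp_tendsto_0[OF q_gt_1] in auto)

lemma smooth_shift_over_power_tendsto_0: "(\<lambda>n. real (card (smooth m (n - j))) / q ^ n) \<longlonglongrightarrow> 0"
proof (rule LIMSEQ_offset[where k = j])
  have "(\<lambda>n. real (card (smooth m n)) / q ^ n / q ^ j) \<longlonglongrightarrow> 0 / q ^ j"
    by (intro tendsto_divide smooth_over_power_tendsto_0 tendsto_const) (use q_pos in simp)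
  then show "(\<lambda>n. real (card (smooth m (n + j - j))) / q ^ (n + j)) \<longlonglongrightarrow> 0"
    by (simp add: power_add field_simps)
qed

text \<open>By \<open>Pcount m = O(q\<^sup>m/m)\<close> and \<open>Gcount = O(q\<^sup>n)\<close> the \<open>m\<close>-th term is \<open>O(q\<^sup>n/m\<^sup>2)\<close>, so
  Tannery's theorem applies.\<close>

lemma prime_pairs_sum_over_power_tendsto_0:
  "(\<lambda>n. (\<Sum>m\<in>{1..n}. real (Pcount dp m) ^ 2
           * (if 2 * m \<le> n then real (card (smooth m (n - 2 * m))) else 0)) / q ^ n) \<longlonglongrightarrow> 0"
proof -
  obtain D where D: "\<And>m. m \<ge> 1 \<Longrightarrow> real (Pcount dp m) \<le> D * q ^ m / real m"
    using Pcount_le by blast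
  obtain B where B: "B > 0" "\<And>n. real (Gcount dp n) \<le> B * q ^ n" using Gcount_le by blast
  define a where "a m n = (if 1 \<le> m \<and> 2 * m \<le> n
    then real (Pcount dp m) ^ 2 * real (card (smooth m (n - 2 * m))) / q ^ n else 0)" for m n
  define M where "M m = D\<^sup>2 * B * inverse (real m ^ 2)" for m
  have sum_eq: "(\<Sum>m\<in>{1..n}. real (Pcount dp m) ^ 2
           * (if 2 * m \<le> n then real (card (smooth m (n - 2 * m))) else 0)) / q ^ n = (\<Sum>m. a m n)" for n
  proof -
    have "(\<Sum>m. a m n) = (\<Sum>m\<in>{1..n}. a m n)"
      by (rule suminf_finite) (auto simp: a_def)
    then show ?thesis unfolding sum_divide_distrib by (auto simp: a_def intro: sum.cong)
  qed
  have "(\<lambda>n. a m n) \<longlonglongrightarrow> 0" for m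
  proof (cases "1 \<le> m")
    case True
    have "(\<lambda>n. real (Pcount dp m) ^ 2 * (real (card (smooth m (n - 2 * m))) / q ^ n))
          \<longlonglongrightarrow> real (Pcount dp m) ^ 2 * 0"
      by (intro tendsto_mult tendsto_const smooth_shift_over_power_tendsto_0)
    moreover have "eventually (\<lambda>n. real (Pcount dp m) ^ 2 * (real (card (smooth m (n - 2 * m))) / q ^ n)
                                   = a m n) sequentially"
      using eventually_ge_at_top[of "2 * m"] by eventually_elim (use True in \<open>simp add: a_def\<close>)
    ultimately show ?thesis by (simp add: Lim_transform_eventually)
  qed (simp add: a_def)
  moreover have "norm (a m n) \<le> M m" for m n
  proof (cases "1 \<le> m \<and> 2 * m \<le> n")
    case True
    have "real (Pcount dp m) ^ 2 \<le> (D * q ^ m / real m) ^ 2"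
      using D[of m] True by (intro power_mono) auto
    moreover have "real (card (smooth m (n - 2 * m))) \<le> B * q ^ (n - 2 * m)"
      using card_smooth_le_Gcount[of m "n - 2 * m"] B(2)[of "n - 2 * m"] by (meson of_nat_le_iff order_trans)
    ultimately have "a m n \<le> (D * q ^ m / real m) ^ 2 * (B * q ^ (n - 2 * m)) / q ^ n"
      using True q_pos by (simp add: a_def divide_right_mono mult_mono)
    also have "\<dots> = M m"
      using q_pos True by (simp add: M_def field_simps flip: power_mult power_add)
    finally show ?thesis using True q_pos by (simp add: a_def)
  next
    case False
    have "0 \<le> M m" using B(1) unfolding M_def by (intro mult_nonneg_nonneg) auto
    moreover have "a m n = 0" unfolding a_def by (rule if_not_P[OF False])
    ultimately show ?thesis by simp
  qed
  moreover have "summable M"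
    unfolding M_def by (intro summable_mult inverse_power_summable) simp
  ultimately have "(\<lambda>n. \<Sum>m. a m n) \<longlonglongrightarrow> (\<Sum>m. 0::real)"
    using tannerys_theorem[of a "\<lambda>_. 0" sequentially M] by (auto intro: always_eventually)
  then show ?thesis unfolding sum_eq by simp
qed

definition QS_sum :: "'p set \<Rightarrow> nat \<Rightarrow> real" where
  "QS_sum S n = (\<Sum>g\<in>elems_of_deg n. real (QS dp S g))"

lemma QS_sum_eq:
  "QS_sum S n = (\<Sum>m\<in>{1..n}. real (card (primes_of_deg S m)) * real (card (smooth m (n - m))))"
  unfolding QS_sum_def using sum_QS_eq[of S n] by (simp flip: of_nat_sum of_nat_mult)

text \<open>Every element of positive degree has at least one prime of maximal degree, and the excess
  \<open>Q - 1 \<le> Q (Q - 1)\<close> is controlled by pairs of distinct such primes.\<close>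

lemma QS_sum_UNIV_minus_Gcount_bounds:
  assumes "n \<ge> 1"
  shows "0 \<le> QS_sum UNIV n - real (Gcount dp n)"
    and "QS_sum UNIV n - real (Gcount dp n) \<le> (\<Sum>m\<in>{1..n}. real (Pcount dp m) ^ 2
           * (if 2 * m \<le> n then real (card (smooth m (n - 2 * m))) else 0))"
proof -
  have excess: "QS_sum UNIV n - real (Gcount dp n) = (\<Sum>g\<in>elems_of_deg n. real (QS dp UNIV g) - 1)"
    by (simp add: QS_sum_def sum_subtractf card_elems_of_deg[symmetric])
  then show "0 \<le> QS_sum UNIV n - real (Gcount dp n)"
    using QS_UNIV_pos[OF _ assms] by (auto intro: sum_nonneg)
  have "real (QS dp UNIV g) - 1 \<le> real (QS dp UNIV g * (QS dp UNIV g - 1))"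
    if "g \<in> elems_of_deg n" for g
  proof -
    have Q: "QS dp UNIV g \<ge> 1" by (rule QS_UNIV_pos[OF that assms])
    then have "(real (QS dp UNIV g) - 1) * 1 \<le> (real (QS dp UNIV g) - 1) * real (QS dp UNIV g)"
      by (intro mult_left_mono) auto
    with Q show ?thesis by (simp add: of_nat_diff mult.commute)
  qed
  then have "(\<Sum>g\<in>elems_of_deg n. real (QS dp UNIV g) - 1)
             \<le> real (\<Sum>g\<in>elems_of_deg n. QS dp UNIV g * (QS dp UNIV g - 1))"
    unfolding of_nat_sum by (rule sum_mono)
  also have "\<dots> \<le> real (\<Sum>m\<in>{1..n}. Pcount dp m ^ 2
                    * (if 2 * m \<le> n then card (smooth m (n - 2 * m)) else 0))"
    using sum_QS_pairs_le[of n] by (simp only: of_nat_le_iff)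
  also have "\<dots> = (\<Sum>m\<in>{1..n}. real (Pcount dp m) ^ 2
                    * (if 2 * m \<le> n then real (card (smooth m (n - 2 * m))) else 0))"
    unfolding of_nat_sum by (intro sum.cong refl) simp
  finally show "QS_sum UNIV n - real (Gcount dp n) \<le> \<dots>" unfolding excess .
qed

lemma QS_sum_UNIV_minus_Gcount_over_power_tendsto_0:
  "(\<lambda>n. (QS_sum UNIV n - real (Gcount dp n)) / q ^ n) \<longlonglongrightarrow> 0"
proof (rule tendsto_sandwich[OF _ _ tendsto_const prime_pairs_sum_over_power_tendsto_0])
  show "eventually (\<lambda>n. 0 \<le> (QS_sum UNIV n - real (Gcount dp n)) / q ^ n) sequentially"
    using eventually_ge_at_top[of 1]
    by eventually_elim (use QS_sum_UNIV_minus_Gcount_bounds(1) q_pos in simp)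
  show "eventually (\<lambda>n. (QS_sum UNIV n - real (Gcount dp n)) / q ^ n
        \<le> (\<Sum>m\<in>{1..n}. real (Pcount dp m) ^ 2
           * (if 2 * m \<le> n then real (card (smooth m (n - 2 * m))) else 0)) / q ^ n) sequentially"
    using eventually_ge_at_top[of 1]
    by eventually_elim (use QS_sum_UNIV_minus_Gcount_bounds(2) q_pos in \<open>simp add: divide_right_mono\<close>)
qed

lemma QS_sum_UNIV_over_power_tendsto: "(\<lambda>n. QS_sum UNIV n / q ^ n) \<longlonglongrightarrow> c"
proof -
  have "(\<lambda>n. (QS_sum UNIV n - real (Gcount dp n)) / q ^ n
            + (real (Gcount dp n) - c * q ^ n) / q ^ n + c) \<longlonglongrightarrow> 0 + 0 + c"
    by (intro tendsto_add QS_sum_UNIV_minus_Gcount_over_power_tendsto_0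
        Gcount_minus_main_term_over_power_tendsto_0 tendsto_const)
  moreover have "(QS_sum UNIV n - real (Gcount dp n)) / q ^ n
            + (real (Gcount dp n) - c * q ^ n) / q ^ n + c = QS_sum UNIV n / q ^ n" for n
    using q_pos by (simp add: field_simps)
  ultimately show ?thesis by simp
qed

lemma eventually_prime_count_deviation_le:
  assumes "has_natural_density dp S \<delta>" "\<epsilon> > 0"
  shows "eventually (\<lambda>m. \<bar>real (card (primes_of_deg S m)) - \<delta> * real (Pcount dp m)\<bar>
                          \<le> \<epsilon> * real (Pcount dp m)) sequentially"
proof -
  have "(\<lambda>m. real (card (primes_of_deg S m)) / real (Pcount dp m)) \<longlonglongrightarrow> \<delta>"
    using assms(1) by (simp add: has_natural_density_def primes_of_deg_def)
  then have "eventually (\<lambda>m. \<bar>real (card (primes_of_deg S m)) / real (Pcount dp m) - \<delta>\<bar> < \<epsilon>) sequentially"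
    using assms(2) by (simp add: tendsto_iff dist_real_def)
  then show ?thesis
  proof eventually_elim
    case (elim m)
    show ?case
    proof (cases "Pcount dp m = 0")
      case True
      then show ?thesis using card_primes_of_deg_le[of S m] by simp
    next
      case False
      then have "real (card (primes_of_deg S m)) - \<delta> * real (Pcount dp m)
          = real (Pcount dp m) * (real (card (primes_of_deg S m)) / real (Pcount dp m) - \<delta>)"
        by (simp add: field_simps)
      then have "\<bar>real (card (primes_of_deg S m)) - \<delta> * real (Pcount dp m)\<bar>
          = real (Pcount dp m) * \<bar>real (card (primes_of_deg S m)) / real (Pcount dp m) - \<delta>\<bar>"
        by (simp add: abs_mult)
      also have "\<dots> \<le> real (Pcount dp m) * \<epsilon>" using elim by (intro mult_left_mono) auto
      finally show ?thesis by (simp add: mult.commute)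
    qed
  qed
qed

lemma QS_sum_density:
  assumes "has_natural_density dp S \<delta>"
  shows "(\<lambda>n. (QS_sum S n - \<delta> * QS_sum UNIV n) / q ^ n) \<longlonglongrightarrow> 0"
proof -
  define x where "x m = real (card (primes_of_deg S m)) - \<delta> * real (Pcount dp m)" for m
  define w where "w m n = real (card (smooth m (n - m))) / q ^ n" for m n
  have small: "eventually (\<lambda>m. \<bar>x m\<bar> \<le> \<epsilon> * real (Pcount dp m)) sequentially" if "\<epsilon> > 0" for \<epsilon>
    unfolding x_def by (rule eventually_prime_count_deviation_le[OF assms that])
  have "Bseq (\<lambda>n. QS_sum UNIV n / q ^ n)"
    using QS_sum_UNIV_over_power_tendsto by (intro convergent_imp_Bseq convergentI)
  then obtain B where B: "\<And>n. norm (QS_sum UNIV n / q ^ n) \<le> B" by (rule BseqE) blast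
  have w_lim: "(\<lambda>n. w m n) \<longlonglongrightarrow> 0" for m
    unfolding w_def by (rule smooth_shift_over_power_tendsto_0)
  have "(\<lambda>n. \<Sum>m\<in>{1..n}. x m * w m n) \<longlonglongrightarrow> 0"
  proof (rule weighted_sum_tendsto_zero[OF small w_lim])
    show "(\<Sum>m\<in>{1..n}. real (Pcount dp m) * w m n) \<le> B" for n
      using B[of n] q_pos by (simp add: QS_sum_eq w_def card_primes_of_deg_UNIV sum_divide_distrib)
  qed (use q_pos in \<open>auto simp: w_def\<close>)
  moreover have "(QS_sum S n - \<delta> * QS_sum UNIV n) / q ^ n = (\<Sum>m\<in>{1..n}. x m * w m n)" for n
    by (simp add: QS_sum_eq card_primes_of_deg_UNIV x_def w_def sum_divide_distrib sum_distrib_left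
        flip: sum_subtractf) (simp add: algebra_simps)
  ultimately show ?thesis by simp
qed

end

theorem lemma2p1:
  fixes dp :: "'p \<Rightarrow> nat" and c q \<eta> \<delta> :: real and S :: "'p set"
  assumes deg_pos: "\<And>P. dp P > 0"
    and fin: "\<And>n. finite {g. degG dp g = n}"
    and c_pos: "c > 0" and q_gt: "q > 1" and eta: "0 \<le> \<eta>" "\<eta> < 1"
    and Asharp: "(\<lambda>n. real (Gcount dp n) - c * q ^ n) \<in> O(\<lambda>n. q powr (\<eta> * real n))"
    and Z_nonzero: "\<exists>r > 1 / q. \<exists>F. F holomorphic_on (ball 0 r - {complex_of_real (1 / q)})
                      \<and> (\<forall>z \<in> ball 0 (1 / q). F z = ZG dp z)
                      \<and> F (complex_of_real (- 1 / q)) \<noteq> 0"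
    and dens: "has_natural_density dp S \<delta>"
  shows "(\<lambda>n. (\<Sum>g\<in>{g. degG dp g = n}. real (QS dp S g)) - c * \<delta> * q ^ n) \<in> o(\<lambda>n. q ^ n)"
proof -
  interpret axiom_A_semigroup dp c q \<eta>
    by unfold_locales (use deg_pos fin q_gt eta Asharp in auto)
  have "(\<lambda>n. (QS_sum S n - \<delta> * QS_sum UNIV n) / q ^ n + \<delta> * (QS_sum UNIV n / q ^ n) - c * \<delta>)
          \<longlonglongrightarrow> 0 + \<delta> * c - c * \<delta>"
    by (intro tendsto_diff tendsto_add tendsto_mult tendsto_const QS_sum_density[OF dens]
        QS_sum_UNIV_over_power_tendsto)
  moreover have "(QS_sum S n - \<delta> * QS_sum UNIV n) / q ^ n + \<delta> * (QS_sum UNIV n / q ^ n) - c * \<delta>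
      = (QS_sum S n - c * \<delta> * q ^ n) / q ^ n" for n
    using q_pos by (simp add: field_simps)
  ultimately have "(\<lambda>n. (QS_sum S n - c * \<delta> * q ^ n) / q ^ n) \<longlonglongrightarrow> 0"
    by simp
  then show ?thesis
    using q_pos by (intro smalloI_tendsto) (auto simp: QS_sum_def elems_of_deg_def)
qed

end
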